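(* Let $G$ be a finite simple graph and let $k\ge 1$ and $c\ge 2$ be integers. For any positive integer $r$, if $G$ has a weak $kr$-guidance system of maximum outdegree at most $c$, then the $k$-distance power $G^k$ has a weak $r$-guidance system of maximum outdegree at most $2c^k$.
   Context: All graphs are finite, simple and undirected. An orientation of $G$ is a directed graph $\vec{H}$ on $V(G)$ such that every $(u,v)\in E(\vec{H})$ satisfies $uv\in E(G)$, and for every $uv\in E(G)$ at least one of $(u,v),(v,u)$ lies in $E(\vec{H})$ (both are allowed). A partial orientation of $G$ is a spanning directed subgraph of an orientation of $G$ (so each edge may be directed in neither, one, or both directions). For a partial orientation $\vec{H}$, $B_{\vec{H}}(v,a)$ denotes the set of vertices reachable from $v$ by a directed path in $\vec{H}$ of length at most $a$. A weak $r$-guidance system of $G$ is a partial orientation $\vec{H}$ of $G$ such that for any distinct vertices $u,v$ at distance $\ell\le r$ in $G$ there exist non-negative integers $a,b$ with $a+b=\ell-1$ such that $G$ contains an edge between $B_{\vec{H}}(u,a)$ and $B_{\vec{H}}(v,b)$. The $k$-distance power $G^k$ is the graph on $V(G)$ in which two distinct vertices are adjacent iff their distance in $G$ is at most $k$. *)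

theory Defs
  imports Main
begin

definition simple_graph :: "'a set \<Rightarrow> ('a \<Rightarrow> 'a \<Rightarrow> bool) \<Rightarrow> bool" where
  "simple_graph V E \<longleftrightarrow> finite V \<and> (\<forall>u v. E u v \<longrightarrow> u \<in> V \<and> v \<in> V)
     \<and> (\<forall>u v. E u v \<longrightarrow> E v u) \<and> (\<forall>u. \<not> E u u)"

definition has_dist :: "('a \<Rightarrow> 'a \<Rightarrow> bool) \<Rightarrow> 'a \<Rightarrow> 'a \<Rightarrow> nat \<Rightarrow> bool" where
  "has_dist E u v l \<longleftrightarrow> (E ^^ l) u v \<and> (\<forall>m<l. \<not> (E ^^ m) u v)"

text \<open>Partial orientation: a set of arcs, each arc along an edge of G
  (an edge may carry no, one or both directions).\<close>
definition partial_orientation :: "('a \<Rightarrow> 'a \<Rightarrow> bool) \<Rightarrow> ('a \<Rightarrow> 'a \<Rightarrow> bool) \<Rightarrow> bool" where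
  "partial_orientation E D \<longleftrightarrow> (\<forall>u v. D u v \<longrightarrow> E u v)"

definition out_ball :: "('a \<Rightarrow> 'a \<Rightarrow> bool) \<Rightarrow> 'a \<Rightarrow> nat \<Rightarrow> 'a set" where
  "out_ball D v a = {w. \<exists>i\<le>a. (D ^^ i) v w}"

definition max_outdeg_le :: "'a set \<Rightarrow> ('a \<Rightarrow> 'a \<Rightarrow> bool) \<Rightarrow> nat \<Rightarrow> bool" where
  "max_outdeg_le V D c \<longleftrightarrow> (\<forall>v\<in>V. card {w. D v w} \<le> c)"

definition weak_guidance ::
  "'a set \<Rightarrow> ('a \<Rightarrow> 'a \<Rightarrow> bool) \<Rightarrow> ('a \<Rightarrow> 'a \<Rightarrow> bool) \<Rightarrow> nat \<Rightarrow> bool" where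
  "weak_guidance V E D r \<longleftrightarrow> partial_orientation E D \<and>
     (\<forall>u\<in>V. \<forall>v\<in>V. \<forall>l. u \<noteq> v \<and> l \<le> r \<and> has_dist E u v l \<longrightarrow>
        (\<exists>a b. a + b = l - 1 \<and>
           (\<exists>x\<in>out_ball D u a. \<exists>y\<in>out_ball D v b. E x y)))"

definition graph_power :: "('a \<Rightarrow> 'a \<Rightarrow> bool) \<Rightarrow> nat \<Rightarrow> 'a \<Rightarrow> 'a \<Rightarrow> bool" where
  "graph_power E k u v \<longleftrightarrow> u \<noteq> v \<and> (\<exists>l\<le>k. (E ^^ l) u v)"

end

theory Submission
  imports Defs
begin

text \<open>Take \<open>D' = D\<^sup>k\<close>, the \<open>k\<close>-distance power of the orientation. Out-neighbours of \<open>v\<close>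
  in \<open>D\<^sup>k\<close> are reached by directed paths of length \<open>1, \<dots>, k\<close>, so there are at most
  \<open>c + \<dots> + c\<^sup>k \<le> 2 c\<^sup>k\<close> of them. If \<open>u, v\<close> are at distance \<open>l\<close> in \<open>G\<^sup>k\<close>, their distance
  \<open>d\<close> in \<open>G\<close> satisfies \<open>k (l - 1) < d \<le> k l\<close>. The guidance system yields a geodesic
  consisting of a directed path of length \<open>a\<close> from \<open>u\<close>, an edge, and a directed path of
  length \<open>b\<close> from \<open>v\<close>, with \<open>a + b = d - 1\<close>. Cutting the first path after
  \<open>k \<lfloor>a / k\<rfloor>\<close> steps and the second after \<open>min b (k (l - 1 - \<lfloor>a / k\<rfloor>))\<close> steps leaves
  a middle piece of length at most \<open>k\<close>, i.e. an edge of \<open>G\<^sup>k\<close> between the \<open>D\<^sup>k\<close>-balls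
  of radii \<open>\<lfloor>a / k\<rfloor>\<close> and \<open>l - 1 - \<lfloor>a / k\<rfloor>\<close>.\<close>

lemma symp_relpowp:
  assumes "symp R"
  shows "symp (R ^^ n)"
proof (induction n)
  case 0
  then show ?case by (simp add: symp_def)
next
  case (Suc n)
  show ?case
  proof (rule sympI)
    fix x z assume "(R ^^ Suc n) x z"
    then obtain y where "(R ^^ n) x y" "R y z" by (rule relpowp_Suc_E)
    then have "R z y" "(R ^^ n) y x" using assms Suc.IH by (auto dest: sympD)
    then show "(R ^^ Suc n) z x" by (rule relpowp_Suc_I2)
  qed
qed

lemma relpowp_join_out_paths:
  assumes "partial_orientation E D" and "symp E"
    and "(D ^^ i) u x" and "(E ^^ m) x y" and "(D ^^ j) v y"
  shows "(E ^^ (i + m + j)) u v"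
proof -
  have lift: "\<And>n x y. (D ^^ n) x y \<Longrightarrow> (E ^^ n) x y"
    using assms(1) unfolding partial_orientation_def by (blast intro: relpowp_mono)
  have "(E ^^ j) y v"
    using lift[OF assms(5)] sympD[OF symp_relpowp[OF assms(2)]] by blast
  then show ?thesis using lift[OF assms(3)] assms(4) by (blast intro: relpowp_trans)
qed

lemma graph_power_relpowp_imp_relpowp:
  assumes "(graph_power R k ^^ i) u w"
  shows "\<exists>m\<le>k * i. (R ^^ m) u w"
  using assms
proof (induction i arbitrary: w)
  case 0
  then show ?case by auto
next
  case (Suc i)
  then obtain z where "(graph_power R k ^^ i) u z" "graph_power R k z w"
    by (auto elim: relpowp_Suc_E)
  then obtain m m' where "m \<le> k * i" "(R ^^ m) u z" "m' \<le> k" "(R ^^ m') z w"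
    using Suc.IH unfolding graph_power_def by blast
  then have "(R ^^ (m + m')) u w" "m + m' \<le> k * Suc i"
    by (auto intro: relpowp_trans)
  then show ?case by blast
qed

lemma relpowp_imp_graph_power_relpowp:
  assumes "(R ^^ m) u w" and "m \<le> k * j"
  shows "\<exists>t\<le>j. (graph_power R k ^^ t) u w"
  using assms
proof (induction j arbitrary: u m)
  case 0
  then show ?case by auto
next
  case (Suc j)
  obtain z where z: "(R ^^ min m k) u z" "(R ^^ (m - min m k)) z w"
    using Suc.prems(1) relpowp_add[where P = R and m = "min m k" and n = "m - min m k"] by auto
  moreover have "m - min m k \<le> k * j" using Suc.prems(2) by auto
  ultimately obtain t where "t \<le> j" "(graph_power R k ^^ t) z w"
    using Suc.IH by blast
  moreover have "u = z \<or> graph_power R k u z"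
    using z(1) unfolding graph_power_def by (metis min.cobounded2)
  ultimately show ?case by (metis Suc_le_mono le_SucI relpowp_Suc_I2)
qed

lemma out_ball_graph_power: "out_ball (graph_power R k) u j = out_ball R u (k * j)"
proof
  show "out_ball (graph_power R k) u j \<subseteq> out_ball R u (k * j)"
  proof
    fix w assume "w \<in> out_ball (graph_power R k) u j"
    then obtain i where "i \<le> j" "(graph_power R k ^^ i) u w"
      unfolding out_ball_def by blast
    then obtain m where "m \<le> k * i" "(R ^^ m) u w"
      by (blast dest: graph_power_relpowp_imp_relpowp)
    moreover have "k * i \<le> k * j" using \<open>i \<le> j\<close> by simp
    ultimately show "w \<in> out_ball R u (k * j)"
      unfolding out_ball_def by (blast dest: order_trans)
  qed
  show "out_ball R u (k * j) \<subseteq> out_ball (graph_power R k) u j"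
  proof
    fix w assume "w \<in> out_ball R u (k * j)"
    then obtain m where "(R ^^ m) u w" "m \<le> k * j" unfolding out_ball_def by blast
    then have "\<exists>t\<le>j. (graph_power R k ^^ t) u w" by (rule relpowp_imp_graph_power_relpowp)
    then show "w \<in> out_ball (graph_power R k) u j" unfolding out_ball_def by blast
  qed
qed

lemma relpowp_in_out_ball_graph_power:
  assumes "(R ^^ m) u w" and "m \<le> k * j"
  shows "w \<in> out_ball (graph_power R k) u j"
proof -
  have "w \<in> out_ball R u (k * j)" using assms unfolding out_ball_def by blast
  then show ?thesis by (simp only: out_ball_graph_power)
qed

lemma relpowp_imp_has_dist:
  assumes "(R ^^ m) u v"
  shows "\<exists>d\<le>m. has_dist R u v d"
proof -
  define d where "d = (LEAST n. (R ^^ n) u v)"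
  have "has_dist R u v d"
    unfolding has_dist_def d_def using assms by (metis LeastI not_less_Least)
  moreover have "d \<le> m" unfolding d_def using assms by (rule Least_le)
  ultimately show ?thesis by blast
qed

lemma has_dist_graph_power:
  assumes "has_dist (graph_power E k) u v l" and "u \<noteq> v"
  obtains d where "has_dist E u v d" and "k * (l - 1) < d" and "d \<le> k * l"
proof -
  have walk: "(graph_power E k ^^ l) u v" and shortest: "\<forall>m<l. \<not> (graph_power E k ^^ m) u v"
    using assms(1) unfolding has_dist_def by auto
  have "l \<noteq> 0" using walk assms(2) by (metis relpowp_0_E)
  have "v \<in> out_ball (graph_power E k) u l" using walk unfolding out_ball_def by blast
  then have "v \<in> out_ball E u (k * l)" by (simp only: out_ball_graph_power)
  then obtain m where "m \<le> k * l" "(E ^^ m) u v" unfolding out_ball_def by blast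
  then obtain d where d: "has_dist E u v d" "d \<le> k * l"
    using relpowp_imp_has_dist le_trans by metis
  moreover have "\<not> d \<le> k * (l - 1)"
  proof
    assume "d \<le> k * (l - 1)"
    moreover have "(E ^^ d) u v" using d(1) unfolding has_dist_def by blast
    ultimately have "v \<in> out_ball (graph_power E k) u (l - 1)"
      by (blast intro: relpowp_in_out_ball_graph_power)
    then obtain t where "t \<le> l - 1" "(graph_power E k ^^ t) u v" unfolding out_ball_def by blast
    moreover from \<open>t \<le> l - 1\<close> \<open>l \<noteq> 0\<close> have "t < l" by linarith
    ultimately show False using shortest by blast
  qed
  ultimately show ?thesis using that by (meson not_le)
qed

lemma geodesic_shortcut:
  assumes "partial_orientation E D" and "symp E" and "has_dist E u v d"
    and "x \<in> out_ball D u a" and "y \<in> out_ball D v b" and "E x y" and "a + b + 1 = d"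
    and "p \<le> a" and "q \<le> b" and "d \<le> p + q + k"
  obtains x' y' where "(D ^^ p) u x'" and "(D ^^ q) v y'" and "graph_power E k x' y'"
proof -
  obtain i j where ij: "i \<le> a" "(D ^^ i) u x" "j \<le> b" "(D ^^ j) v y"
    using assms(4,5) unfolding out_ball_def by blast
  have edge: "(E ^^ 1) x y" unfolding relpowp_1 by (rule assms(6))
  have "(E ^^ (i + 1 + j)) u v" by (rule relpowp_join_out_paths[OF assms(1,2) ij(2) edge ij(4)])
  then have "d \<le> i + 1 + j" using assms(3) unfolding has_dist_def by (meson not_less)
  then have "i = p + (a - p)" "j = q + (b - q)" using ij(1,3) assms(7-9) by auto
  then obtain x' y' where x': "(D ^^ p) u x'" "(D ^^ (a - p)) x' x"
    and y': "(D ^^ q) v y'" "(D ^^ (b - q)) y' y"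
    using ij(2,4) by (metis relpowp_add relcomppE)
  have "(E ^^ (a - p + 1 + (b - q))) x' y'"
    by (rule relpowp_join_out_paths[OF assms(1,2) x'(2) edge y'(2)])
  moreover have "x' \<noteq> y'"
  proof
    assume "x' = y'"
    then have "(E ^^ (p + 0 + q)) u v"
      using relpowp_join_out_paths[OF assms(1,2) x'(1) _ y'(1), where m = 0] by simp
    moreover have "p + 0 + q < d" using assms(7-9) by linarith
    ultimately show False using assms(3) unfolding has_dist_def by blast
  qed
  moreover have "a - p + 1 + (b - q) \<le> k" using assms(7-10) by linarith
  ultimately have "graph_power E k x' y'" unfolding graph_power_def by blast
  then show ?thesis using that x'(1) y'(1) by blast
qed

lemma block_cut_exists:
  fixes a b d k l :: nat
  assumes "a + b + 1 = d" and "k * (l - 1) < d" and "d \<le> k * l"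
  obtains a' b' p q where "a' + b' = l - 1" and "p \<le> a" and "p \<le> k * a'"
    and "q \<le> b" and "q \<le> k * b'" and "d \<le> p + q + k"
proof -
  have "k > 0" using assms(2,3) by (cases k) auto
  define a' where "a' = a div k"
  define b' where "b' = l - 1 - a'"
  define p where "p = k * a'"
  define q where "q = min b (k * b')"
  have "p \<le> a" unfolding p_def a'_def by (simp add: mult.commute)
  have "a - p < k" unfolding p_def a'_def using \<open>k > 0\<close>
    by (metis minus_mult_div_eq_mod mod_less_divisor)
  have "a < k * l" using assms(1,3) by linarith
  then have "a' < l" unfolding a'_def using \<open>k > 0\<close>
    by (simp add: div_less_iff_less_mult mult.commute)
  then have "a' + b' = l - 1" unfolding b'_def by simp
  moreover have "d \<le> p + q + k"
  proof (cases "q = b")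
    case True
    then show ?thesis using \<open>a - p < k\<close> \<open>p \<le> a\<close> assms(1) by linarith
  next
    case False
    then have "p + q = k * (l - 1)"
      unfolding q_def p_def using \<open>a' + b' = l - 1\<close> by (simp flip: add_mult_distrib2)
    moreover have "k * l = k * (l - 1) + k" using \<open>a' < l\<close> by (cases l) auto
    ultimately show ?thesis using assms(3) by linarith
  qed
  moreover have "q \<le> b" "q \<le> k * b'" unfolding q_def by simp_all
  ultimately show ?thesis using that \<open>p \<le> a\<close> unfolding p_def by blast
qed

lemma weak_guidance_graph_power:
  assumes "symp E" and "weak_guidance V E D (k * r)"
  shows "weak_guidance V (graph_power E k) (graph_power D k) r"
  unfolding weak_guidance_def
proof (intro conjI ballI allI impI)
  have orient: "partial_orientation E D" using assms(2) unfolding weak_guidance_def by blast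
  then show "partial_orientation (graph_power E k) (graph_power D k)"
    unfolding partial_orientation_def graph_power_def by (blast intro: relpowp_mono)
  fix u v l
  assume "u \<in> V" "v \<in> V" and uvl: "u \<noteq> v \<and> l \<le> r \<and> has_dist (graph_power E k) u v l"
  then have "has_dist (graph_power E k) u v l" and "u \<noteq> v" by auto
  then obtain d where d: "has_dist E u v d" "k * (l - 1) < d" "d \<le> k * l"
    by (rule has_dist_graph_power)
  have "d \<le> k * r" using d(3) uvl by (meson le_trans mult_le_mono2)
  then obtain a b x y where "a + b = d - 1" and x: "x \<in> out_ball D u a"
    and y: "y \<in> out_ball D v b" and "E x y"
    using assms(2) \<open>u \<in> V\<close> \<open>v \<in> V\<close> uvl d(1) unfolding weak_guidance_def by blast
  moreover have "d \<noteq> 0" using d(2) by linarith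
  ultimately have "a + b + 1 = d" by simp
  then obtain a' b' p q where "a' + b' = l - 1" "p \<le> a" "p \<le> k * a'"
    and "q \<le> b" "q \<le> k * b'" "d \<le> p + q + k"
    using block_cut_exists d(2,3) by blast
  then obtain x' y' where x': "(D ^^ p) u x'" and y': "(D ^^ q) v y'" and "graph_power E k x' y'"
    using geodesic_shortcut[OF orient assms(1) d(1) x y \<open>E x y\<close> \<open>a + b + 1 = d\<close>] by blast
  moreover have "x' \<in> out_ball (graph_power D k) u a'"
    using x' \<open>p \<le> k * a'\<close> by (rule relpowp_in_out_ball_graph_power)
  moreover have "y' \<in> out_ball (graph_power D k) v b'"
    using y' \<open>q \<le> k * b'\<close> by (rule relpowp_in_out_ball_graph_power)
  ultimately show "\<exists>a b. a + b = l - 1 \<and> (\<exists>x\<in>out_ball (graph_power D k) u a.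
      \<exists>y\<in>out_ball (graph_power D k) v b. graph_power E k x y)"
    using \<open>a' + b' = l - 1\<close> by blast
qed

lemma relpowp_image_subset:
  assumes "\<And>x y. D x y \<Longrightarrow> y \<in> V" and "v \<in> V"
  shows "{w. (D ^^ i) v w} \<subseteq> V"
  using assms by (cases i) (auto elim: relpowp_Suc_E)

lemma card_relpowp_le_power:
  assumes "finite V" and "\<And>x y. D x y \<Longrightarrow> y \<in> V" and "max_outdeg_le V D c" and "v \<in> V"
  shows "card {w. (D ^^ i) v w} \<le> c ^ i"
proof (induction i)
  case 0
  then show ?case by simp
next
  case (Suc i)
  let ?S = "{w. (D ^^ i) v w}"
  have "?S \<subseteq> V" using assms(2,4) by (rule relpowp_image_subset)
  have "card {w. (D ^^ Suc i) v w} = card (\<Union>y\<in>?S. {w. D y w})"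
    by (auto elim: relpowp_Suc_E intro: relpowp_Suc_I intro!: arg_cong[where f = card])
  also have "\<dots> \<le> (\<Sum>y\<in>?S. card {w. D y w})"
    using \<open>?S \<subseteq> V\<close> assms(1) by (blast intro: card_UN_le finite_subset)
  also have "\<dots> \<le> card ?S * c"
    using sum_bounded_above[of ?S "\<lambda>y. card {w. D y w}" c] assms(3) \<open>?S \<subseteq> V\<close>
    unfolding max_outdeg_le_def by auto
  also have "\<dots> \<le> c ^ Suc i" using Suc.IH by (simp add: mult.commute)
  finally show ?case .
qed

lemma sum_powers_le_twice_largest:
  assumes "(c::nat) \<ge> 2"
  shows "(\<Sum>i = 1..k. c ^ i) \<le> 2 * c ^ k"
proof (induction k)
  case 0
  then show ?case by simp
next
  case (Suc k)
  have "(\<Sum>i = 1..Suc k. c ^ i) = (\<Sum>i = 1..k. c ^ i) + c * c ^ k" by simp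
  also have "\<dots> \<le> 2 * c ^ k + c * c ^ k" using Suc.IH by simp
  also have "\<dots> \<le> 2 * c ^ Suc k" using assms by simp
  finally show ?case .
qed

lemma max_outdeg_le_graph_power:
  assumes "finite V" and "\<And>x y. D x y \<Longrightarrow> y \<in> V" and "max_outdeg_le V D c" and "c \<ge> 2"
  shows "max_outdeg_le V (graph_power D k) (2 * c ^ k)"
  unfolding max_outdeg_le_def
proof
  fix v assume "v \<in> V"
  let ?N = "\<lambda>i. {w. (D ^^ i) v w}"
  have "{w. graph_power D k v w} \<subseteq> (\<Union>i\<in>{1..k}. ?N i)"
  proof
    fix w assume "w \<in> {w. graph_power D k v w}"
    then obtain i where "v \<noteq> w" "i \<le> k" "(D ^^ i) v w" unfolding graph_power_def by auto
    moreover from this have "i \<noteq> 0" by (metis relpowp_0_E)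
    ultimately show "w \<in> (\<Union>i\<in>{1..k}. ?N i)" by auto
  qed
  moreover have "finite (?N i)" for i
    using relpowp_image_subset[OF assms(2) \<open>v \<in> V\<close>] assms(1) by (rule finite_subset)
  ultimately have "card {w. graph_power D k v w} \<le> card (\<Union>i\<in>{1..k}. ?N i)"
    by (intro card_mono) auto
  also have "\<dots> \<le> (\<Sum>i = 1..k. card (?N i))" by (rule card_UN_le) simp
  also have "\<dots> \<le> (\<Sum>i = 1..k. c ^ i)"
    using card_relpowp_le_power[OF assms(1-3) \<open>v \<in> V\<close>] by (intro sum_mono)
  also have "\<dots> \<le> 2 * c ^ k" using assms(4) by (rule sum_powers_le_twice_largest)
  finally show "card {w. graph_power D k v w} \<le> 2 * c ^ k" .
qed

theorem lemma5:
  fixes V :: "'a set" and E D :: "'a \<Rightarrow> 'a \<Rightarrow> bool" and k c r :: nat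
  assumes "simple_graph V E" and "k \<ge> 1" and "c \<ge> 2" and "r > 0"
    and "weak_guidance V E D (k * r)" and "max_outdeg_le V D c"
  shows "\<exists>D'. weak_guidance V (graph_power E k) D' r \<and> max_outdeg_le V D' (2 * c ^ k)"
proof -
  have "finite V" and "symp E" and E_in_V: "\<And>x y. E x y \<Longrightarrow> y \<in> V"
    using assms(1) unfolding simple_graph_def symp_def by auto
  have "\<And>x y. D x y \<Longrightarrow> y \<in> V"
    using assms(5) E_in_V unfolding weak_guidance_def partial_orientation_def by blast
  then have "max_outdeg_le V (graph_power D k) (2 * c ^ k)"
    using max_outdeg_le_graph_power \<open>finite V\<close> assms(3,6) by blast
  moreover have "weak_guidance V (graph_power E k) (graph_power D k) r"
    using weak_guidance_graph_power \<open>symp E\<close> assms(5) by blast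
  ultimately show ?thesis by blast
qed

end
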